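(* Consider the algorithm AOD described in the context, with known horizon $T$, under assumptions (A1)–(A3). For any interval $J=[i,j]\in\mathcal{D}$ with $j\le T$, \[ \sum_{t\in J}f_t(\mathbf{w}_t)-\min_{\mathbf{w}\in\Omega}\sum_{t\in J}f_t(\mathbf{w})\le\big(\sqrt{3c(j)}+DG\big)\sqrt{|J|}, \] where $c(j)=1+\ln j+\ln(1+\log_2 T)+\ln\frac{5+3\ln(1+j)}{2}$.
   Context: Online convex optimization: $\Omega\subseteq\mathbb{R}^d$ convex; in round $t=1,\ldots,T$ the learner plays $\mathbf{w}_t\in\Omega$, then a convex $f_t:\Omega\to\mathbb{R}$ is revealed. Assumptions: (A1) $\|\nabla f_t(\mathbf{w})\|_2\le G$ for all $\mathbf{w}\in\Omega$, $t\in[T]$; (A2) $\mathbf{0}\in\Omega$ and $\max_{\mathbf{w},\mathbf{w}'\in\Omega}\|\mathbf{w}-\mathbf{w}'\|_2\le D$; (A3) $0\le f_t\le1$ on $\Omega$. $\Pi_\Omega$ is Euclidean projection. Dense geometric covering intervals: $\mathcal{D}=\bigcup_{k\ge0,\,2^k\le T}\mathcal{D}_k$, $\mathcal{D}_k=\{[(i-1)2^k+1,\,i2^k]: i=1,2,\ldots\}$. Algorithm AOD: for each $I\in\mathcal{D}$ an expert $E_I$ runs online gradient descent $\mathbf{w}_{t+1,I}=\Pi_\Omega[\mathbf{w}_{t,I}-\eta_I\nabla f_t(\mathbf{w}_{t,I})]$, $\eta_I=D/(G\sqrt{|I|})$, over rounds $t\in I$; its initial point is arbitrary if $\min I=1$,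 and otherwise is the next iterate of the expert of the preceding same-length interval $[\min I-|I|,\min I-1]$ after processing $f_{\min I-1}$. Active experts at round $t$: $\mathcal{A}_t=\{E_I:I\in\mathcal{D},t\in I\}$. Meta-algorithm (AdaNormalHedge): $\Phi(R,C)=\exp([R]_+^2/(3C))$, $[x]_+=\max(0,x)$, $\Phi(0,0)=1$, $w(R,C)=\tfrac12(\Phi(R+1,C+1)-\Phi(R-1,C+1))$, $R_{t-1,I}=\sum_{u=\min I}^{t-1}(f_u(\mathbf{w}_u)-f_u(\mathbf{w}_{u,I}))$, $C_{t-1,I}=\sum_{u=\min I}^{t-1}|f_u(\mathbf{w}_u)-f_u(\mathbf{w}_{u,I})|$, $p_{t,I}=w(R_{t-1,I},C_{t-1,I})/\sum_{E_{I'}\in\mathcal{A}_t}w(R_{t-1,I'},C_{t-1,I'})$, played point $\mathbf{w}_t=\sum_{E_I\in\mathcal{A}_t}p_{t,I}\mathbf{w}_{t,I}$. *)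

theory Defs
  imports "HOL-Analysis.Analysis"
begin

definition levels :: "nat \<Rightarrow> nat set" where
  "levels T = {k. 2 ^ k \<le> T}"

text \<open>Start (min I) of the unique interval I of length 2^k containing round t \<ge> 1.\<close>
definition ivl_start :: "nat \<Rightarrow> nat \<Rightarrow> nat" where
  "ivl_start k t = ((t - 1) div 2 ^ k) * 2 ^ k + 1"

definition eta :: "real \<Rightarrow> real \<Rightarrow> nat \<Rightarrow> real" where
  "eta D G k = D / (G * sqrt (2 ^ k))"

text \<open>Online gradient descent with projection onto S, step size et, gradients g,
  rounds indexed from 1: value at round 1 is x1, value at round t+1 is
  Pi_S (value at t - et * g t (value at t)).  (Index 0 is unused.)\<close>
primrec ogd :: "'a::euclidean_space set \<Rightarrow> (nat \<Rightarrow> 'a \<Rightarrow> 'a) \<Rightarrow> real \<Rightarrow> 'a \<Rightarrow> nat \<Rightarrow> 'a" where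
  "ogd S g et x1 0 = x1"
| "ogd S g et x1 (Suc t) =
     (if t = 0 then x1 else closest_point S (ogd S g et x1 t - et *\<^sub>R g t (ogd S g et x1 t)))"

text \<open>Iterate w_{t,I} of the expert E_I at round t, where I is the level-k interval
  containing t. Since each expert starts at the next iterate of the preceding
  same-length expert, level k is one uninterrupted OGD run with step eta_k.\<close>
definition expert_pt ::
  "'a::euclidean_space set \<Rightarrow> (nat \<Rightarrow> 'a \<Rightarrow> 'a) \<Rightarrow> real \<Rightarrow> real \<Rightarrow> (nat \<Rightarrow> 'a) \<Rightarrow> nat \<Rightarrow> nat \<Rightarrow> 'a" where
  "expert_pt S g D G x1 k t = ogd S g (eta D G k) (x1 k) t"

definition Phi :: "real \<Rightarrow> real \<Rightarrow> real" where
  "Phi R C = exp ((max 0 R)\<^sup>2 / (3 * C))"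

definition anh_weight :: "real \<Rightarrow> real \<Rightarrow> real" where
  "anh_weight R C = (Phi (R + 1) (C + 1) - Phi (R - 1) (C + 1)) / 2"

definition R_stat :: "(nat \<Rightarrow> 'a \<Rightarrow> real) \<Rightarrow> (nat \<Rightarrow> 'a) \<Rightarrow> (nat \<Rightarrow> 'a) \<Rightarrow> nat \<Rightarrow> nat \<Rightarrow> real" where
  "R_stat f w x s t = (\<Sum>u = s..<t. f u (w u) - f u (x u))"

definition C_stat :: "(nat \<Rightarrow> 'a \<Rightarrow> real) \<Rightarrow> (nat \<Rightarrow> 'a) \<Rightarrow> (nat \<Rightarrow> 'a) \<Rightarrow> nat \<Rightarrow> nat \<Rightarrow> real" where
  "C_stat f w x s t = (\<Sum>u = s..<t. \<bar>f u (w u) - f u (x u)\<bar>)"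

text \<open>Unnormalised weight of the active level-k expert at round t (uses the
  played points w u for u < t only).\<close>
definition aod_w ::
  "'a::euclidean_space set \<Rightarrow> (nat \<Rightarrow> 'a \<Rightarrow> real) \<Rightarrow> (nat \<Rightarrow> 'a \<Rightarrow> 'a) \<Rightarrow> real \<Rightarrow> real
    \<Rightarrow> (nat \<Rightarrow> 'a) \<Rightarrow> (nat \<Rightarrow> 'a) \<Rightarrow> nat \<Rightarrow> nat \<Rightarrow> real" where
  "aod_w S f g D G x1 w k t =
     anh_weight (R_stat f w (expert_pt S g D G x1 k) (ivl_start k t) t)
                (C_stat f w (expert_pt S g D G x1 k) (ivl_start k t) t)"

definition aod_p ::
  "'a::euclidean_space set \<Rightarrow> (nat \<Rightarrow> 'a \<Rightarrow> real) \<Rightarrow> (nat \<Rightarrow> 'a \<Rightarrow> 'a) \<Rightarrow> real \<Rightarrow> real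
    \<Rightarrow> nat \<Rightarrow> (nat \<Rightarrow> 'a) \<Rightarrow> (nat \<Rightarrow> 'a) \<Rightarrow> nat \<Rightarrow> nat \<Rightarrow> real" where
  "aod_p S f g D G T x1 w k t =
     aod_w S f g D G x1 w k t / (\<Sum>k'\<in>levels T. aod_w S f g D G x1 w k' t)"

text \<open>w is the sequence of points played by AOD in rounds 1..T (the recurrence
  determines w t from w 1, ..., w (t-1)).\<close>
definition is_aod_play ::
  "'a::euclidean_space set \<Rightarrow> (nat \<Rightarrow> 'a \<Rightarrow> real) \<Rightarrow> (nat \<Rightarrow> 'a \<Rightarrow> 'a) \<Rightarrow> real \<Rightarrow> real
    \<Rightarrow> nat \<Rightarrow> (nat \<Rightarrow> 'a) \<Rightarrow> (nat \<Rightarrow> 'a) \<Rightarrow> bool" where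
  "is_aod_play S f g D G T x1 w \<longleftrightarrow>
     (\<forall>t\<in>{1..T}. w t = (\<Sum>k\<in>levels T. aod_p S f g D G T x1 w k t *\<^sub>R expert_pt S g D G x1 k t))"

definition c_fun :: "nat \<Rightarrow> nat \<Rightarrow> real" where
  "c_fun T j = 1 + ln (real j) + ln (1 + log 2 (real T)) + ln ((5 + 3 * ln (1 + real j)) / 2)"

end

theory Submission
  imports Defs "HOL-Probability.Hoeffding"
begin

(* Write the regret on J against u as the regret of the played points against the expert E_J
   plus the regret of E_J against u.  The second term is the usual bound D G sqrt |J| for online
   gradient descent with step size D / (G sqrt |J|).

   For the first term, let r be the instantaneous regret of the played point against an expert
   and (R, C) its running sum and running absolute sum since the expert started.  Whenever
   |R| <= C and |r| <= 1, the potential Phi(R, C) grows by at most w(R, C) r + 2 |r| / (C + 1),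
   and the error terms 2 |r| / (C + 1) add up to at most 4 ln (1 + C).  The played point is the
   mean of the expert points weighted by w(R, C), so by Jensen's inequality the weighted sum of
   the instantaneous regrets is nonpositive in every round.  Summing over all experts started up
   to round j, the final potentials therefore add up to at most
   (1 + log2 T) j (1 + 4 ln (1 + j)) <= exp (c(j)).  For E_J this says
   exp (R_J^2 / (3 C_J)) <= exp (c(j)) with C_J <= |J|, i.e. R_J <= sqrt (3 c(j) |J|). *)

section \<open>The AdaNormalHedge potential\<close>

lemma Phi_pos: "0 < Phi R C"
  unfolding Phi_def by simp

lemma Phi_eq_1_if_nonpos: "R \<le> 0 \<Longrightarrow> Phi R C = 1"
  unfolding Phi_def by simp

lemma Phi_mono:
  assumes "R \<le> R'" "0 \<le> C"
  shows "Phi R C \<le> Phi R' C"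
proof -
  have "(max 0 R)\<^sup>2 \<le> (max 0 R')\<^sup>2"
    using assms by (intro power_mono) auto
  then show ?thesis
    unfolding Phi_def using assms by (simp add: divide_right_mono)
qed

lemma anh_weight_nonneg: "0 \<le> C \<Longrightarrow> 0 \<le> anh_weight R C"
  unfolding anh_weight_def using Phi_mono[of "R - 1" "R + 1" "C + 1"] by simp

(* Convexity of the perspective (x, y) \<mapsto> x\<^sup>2 / y on the segment from (x0, C) to (x1, C + 1);
   the hypothesis for C = 0 compensates for the junk value x0\<^sup>2 / 0 = 0. *)
lemma power2_div_convex_comb_le:
  fixes X x0 x1 s C :: real
  assumes s: "0 \<le> s" "s \<le> 1" and C: "0 \<le> C"
    and X: "0 \<le> X" "X \<le> (1 - s) * x0 + s * x1" and C0: "C = 0 \<Longrightarrow> x0 = 0"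
  shows "X\<^sup>2 / (C + s) \<le> (1 - s) * (x0\<^sup>2 / C) + s * (x1\<^sup>2 / (C + 1))"
proof -
  define Y where "Y = (1 - s) * x0 + s * x1"
  have "X\<^sup>2 / (C + s) \<le> Y\<^sup>2 / (C + s)"
    using X s C by (intro divide_right_mono power_mono) (auto simp: Y_def)
  also have "\<dots> \<le> (1 - s) * (x0\<^sup>2 / C) + s * (x1\<^sup>2 / (C + 1))"
  proof (cases "s = 0 \<or> C = 0")
    case True
    then show ?thesis
      using C0 s by (auto simp: Y_def power2_eq_square)
  next
    case False
    with s C have "0 < s" "0 < C" by auto
    define Z where "Z = (1 - s) * x0\<^sup>2 * (C + 1) + s * x1\<^sup>2 * C"
    have "Z * (C + s) - Y\<^sup>2 * (C * (C + 1)) = (1 - s) * s * (x0 * (C + 1) - x1 * C)\<^sup>2"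
      by (simp add: Y_def Z_def power2_eq_square algebra_simps)
    moreover have "0 \<le> (1 - s) * s * (x0 * (C + 1) - x1 * C)\<^sup>2"
      using s by simp
    ultimately have "Y\<^sup>2 * (C * (C + 1)) \<le> Z * (C + s)"
      by linarith
    then have "Y\<^sup>2 \<le> Z * (C + s) / (C * (C + 1))"
      using \<open>0 < C\<close> by (subst pos_le_divide_eq) auto
    then have "Y\<^sup>2 / (C + s) \<le> Z / (C * (C + 1))"
      using \<open>0 < s\<close> \<open>0 < C\<close> by (subst pos_divide_le_eq) auto
    also have "\<dots> = (1 - s) * (x0\<^sup>2 / C) + s * (x1\<^sup>2 / (C + 1))"
      using \<open>0 < C\<close> by (simp add: Z_def field_simps add_nonneg_eq_0_iff)
    finally show ?thesis .
  qed
  finally show ?thesis .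
qed

lemma Phi_convex_comb_le:
  fixes R C s a :: real
  assumes s: "0 \<le> s" "s \<le> 1" and RC: "\<bar>R\<bar> \<le> C" and a: "a = 1 \<or> a = -1"
  shows "Phi (R + a * s) (C + s) \<le> (1 - s) * Phi R C + s * Phi (R + a) (C + 1)"
proof -
  have "max 0 (R + a * s) \<le> (1 - s) * max 0 R + s * max 0 (R + a)"
  proof -
    have "R + a * s = (1 - s) * R + s * (R + a)"
      by (simp add: algebra_simps)
    moreover have "(1 - s) * R \<le> (1 - s) * max 0 R" "s * (R + a) \<le> s * max 0 (R + a)"
      using s by (auto intro: mult_left_mono)
    ultimately show ?thesis
      using s by auto
  qed
  then have "(max 0 (R + a * s))\<^sup>2 / (C + s)
      \<le> (1 - s) * ((max 0 R)\<^sup>2 / C) + s * ((max 0 (R + a))\<^sup>2 / (C + 1))"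
    using s RC by (intro power2_div_convex_comb_le) auto
  from divide_right_mono[OF this, of 3] have "Phi (R + a * s) (C + s)
      \<le> exp ((1 - s) * ((max 0 R)\<^sup>2 / (3 * C)) + s * ((max 0 (R + a))\<^sup>2 / (3 * (C + 1))))"
    unfolding Phi_def by (simp add: add_divide_distrib mult.commute)
  also have "\<dots> \<le> (1 - s) * Phi R C + s * Phi (R + a) (C + 1)"
    unfolding Phi_def
    using convex_onD[OF exp_convex, of s "(max 0 R)\<^sup>2 / (3 * C)" "(max 0 (R + a))\<^sup>2 / (3 * (C + 1))"] s
    by simp
  finally show ?thesis .
qed

lemma cosh_le_exp_power2: "cosh d \<le> exp (d\<^sup>2 / 2)" for d :: real
proof -
  define a where "a = \<bar>d\<bar>"
  have "ln ((1 + exp (2 * a)) / 2) \<le> a + d\<^sup>2 / 2"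
    using Hoeffdings_lemma_aux[of "2 * a" "1 / 2"]
    by (simp add: a_def power2_eq_square field_simps)
  then have "exp (ln ((1 + exp (2 * a)) / 2)) \<le> exp (a + d\<^sup>2 / 2)"
    by (rule exp_mono)
  then have "(1 + exp (2 * a)) / 2 \<le> exp (a + d\<^sup>2 / 2)"
    by (simp add: add_pos_pos)
  then have "exp (- a) * ((1 + exp (2 * a)) / 2) \<le> exp (- a) * exp (a + d\<^sup>2 / 2)"
    by (intro mult_left_mono) auto
  moreover have "cosh d = exp (- a) * ((1 + exp (2 * a)) / 2)"
    unfolding a_def cosh_field_def
    by (cases "0 \<le> d") (simp_all add: field_simps flip: exp_add)
  ultimately show ?thesis
    by (simp flip: exp_add)
qed

lemma exp_one_third_le: "exp (1 / 3 :: real) \<le> 7 / 5"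
proof (rule ccontr)
  assume "\<not> ?thesis"
  then have "(7 / 5 :: real) ^ 3 < exp (1 / 3) ^ 3"
    by (intro power_strict_mono) auto
  also have "exp (1 / 3 :: real) ^ 3 = exp 1"
    by (simp flip: exp_of_nat_mult)
  finally show False
    using e_less_272 by (simp add: eval_nat_numeral)
qed

lemma exp_add_le_exp_add_div:
  fixes s x A :: real
  assumes s: "s \<le> 4 / 3" and x: "x \<le> 1 / (3 * A)" and A: "1 \<le> A"
  shows "exp (s + x) \<le> exp s + 2 / A"
proof -
  have "exp (1 / (3 * A)) = exp ((1 - 1 / A) * 0 + (1 / A) * (1 / 3))"
    by simp
  also have "\<dots> \<le> (1 - 1 / A) * exp 0 + (1 / A) * exp (1 / 3)"
    using convex_onD[OF exp_convex, of "1 / A" 0 "1 / 3"] A by simp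
  also have "\<dots> \<le> 1 + (2 / 5) / A"
    using exp_one_third_le A by (simp add: field_simps)
  finally have "exp x - 1 \<le> (2 / 5) / A"
    using exp_mono[OF x] by linarith
  have "exp (s + x) - exp s = exp s * (exp x - 1)"
    by (simp add: exp_add algebra_simps)
  also have "\<dots> \<le> exp s * ((2 / 5) / A)"
    using \<open>exp x - 1 \<le> (2 / 5) / A\<close> by (intro mult_left_mono) auto
  also have "\<dots> \<le> exp (4 / 3) * ((2 / 5) / A)"
    using s A by (intro mult_right_mono) auto
  also have "exp (4 / 3 :: real) = exp (1 / 3) ^ 4"
    by (simp flip: exp_of_nat_mult)
  also have "exp (1 / 3) ^ 4 * ((2 / 5) / A) \<le> (7 / 5) ^ 4 * ((2 / 5) / A)"
    using exp_one_third_le A by (intro mult_right_mono power_mono) auto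
  also have "\<dots> \<le> 2 / A"
    using A by (simp add: field_simps)
  finally show ?thesis by simp
qed

lemma Phi_avg_le_exp:
  fixes R C :: real
  assumes R: "0 < R" "R \<le> C"
  shows "(Phi (R + 1) (C + 1) + Phi (R - 1) (C + 1)) / 2
    \<le> exp (R\<^sup>2 / (3 * C) + (1 / (3 * (C + 1)) - R\<^sup>2 / (9 * (C + 1)\<^sup>2)))"
proof -
  define A where "A = C + 1"
  define m where "m = (R\<^sup>2 + 1) / (3 * A)"
  define \<delta> where "\<delta> = 2 * R / (3 * A)"
  have "0 < C" "0 < A"
    using R by (auto simp: A_def)
  have "Phi (R + 1) A = exp (m + \<delta>)"
    unfolding Phi_def m_def \<delta>_def using R \<open>0 < A\<close> by (simp add: power2_eq_square field_simps)
  moreover have "Phi (R - 1) A \<le> exp (m - \<delta>)"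
  proof -
    have "(max 0 (R - 1))\<^sup>2 \<le> (R - 1)\<^sup>2"
      by (cases "1 \<le> R") (auto simp: power2_eq_square)
    moreover have "(R - 1)\<^sup>2 / (3 * A) = m - \<delta>"
      unfolding m_def \<delta>_def using \<open>0 < A\<close> by (simp add: power2_eq_square field_simps)
    ultimately have "(max 0 (R - 1))\<^sup>2 / (3 * A) \<le> m - \<delta>"
      using \<open>0 < A\<close> by (metis divide_right_mono less_imp_le zero_le_mult_iff zero_le_numeral)
    then show ?thesis
      unfolding Phi_def by simp
  qed
  moreover have "exp m * cosh \<delta> = (exp (m + \<delta>) + exp (m - \<delta>)) / 2"
    by (simp add: cosh_field_def distrib_left flip: exp_add)
  ultimately have "(Phi (R + 1) A + Phi (R - 1) A) / 2 \<le> exp m * cosh \<delta>"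
    by simp
  also have "\<dots> \<le> exp (m + \<delta>\<^sup>2 / 2)"
    using cosh_le_exp_power2[of \<delta>] by (simp add: exp_add)
  also have "m + \<delta>\<^sup>2 / 2 \<le> R\<^sup>2 / (3 * C) + (1 / (3 * A) - R\<^sup>2 / (9 * A\<^sup>2))"
  proof -
    have "m + \<delta>\<^sup>2 / 2 = R\<^sup>2 / (3 * A) + R\<^sup>2 / (3 * A\<^sup>2) + (1 / (3 * A) - R\<^sup>2 / (9 * A\<^sup>2))"
      unfolding m_def \<delta>_def using \<open>0 < A\<close> by (simp add: power2_eq_square field_simps)
    moreover have "R\<^sup>2 / (3 * C) - R\<^sup>2 / (3 * A) - R\<^sup>2 / (3 * A\<^sup>2) = R\<^sup>2 / (3 * C * A\<^sup>2)"
      using \<open>0 < A\<close> \<open>0 < C\<close> by (simp add: power2_eq_square field_simps) (simp add: A_def algebra_simps)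
    moreover have "0 \<le> R\<^sup>2 / (3 * C * A\<^sup>2)"
      using \<open>0 < C\<close> by simp
    ultimately show ?thesis by linarith
  qed
  finally show ?thesis
    unfolding A_def by simp
qed

lemma power2_div_le_four_thirds:
  fixes R C :: real
  assumes "0 < R" "R \<le> C" "R\<^sup>2 < 3 * (C + 1)"
  shows "R\<^sup>2 / (3 * C) \<le> 4 / 3"
proof (cases "R \<le> 4")
  case True
  have "R\<^sup>2 / (3 * C) \<le> R\<^sup>2 / (3 * R)"
    using assms by (intro divide_left_mono) auto
  then show ?thesis
    using True \<open>0 < R\<close> by (simp add: power2_eq_square)
next
  case False
  then have "R\<^sup>2 / (3 * C) \<le> (C + 1) / C" and "4 < C"
    using assms by (auto simp: field_simps)
  moreover have "(C + 1) / C = 1 + 1 / C"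
    using \<open>4 < C\<close> by (simp add: field_simps)
  moreover have "1 / C \<le> 1 / 4"
    using \<open>4 < C\<close> by (simp add: field_simps)
  ultimately show ?thesis
    by linarith
qed

lemma Phi_second_difference_le:
  fixes R C :: real
  assumes RC: "\<bar>R\<bar> \<le> C"
  shows "(Phi (R + 1) (C + 1) + Phi (R - 1) (C + 1)) / 2 - Phi R C \<le> 2 / (C + 1)"
proof (cases "R \<le> 0")
  case True
  have "Phi (R + 1) (C + 1) \<le> Phi 1 (C + 1)"
    using True RC by (intro Phi_mono) auto
  also have "\<dots> = exp (1 / (3 * (C + 1)))"
    by (simp add: Phi_def)
  also have "\<dots> \<le> 1 + 2 * (1 / (3 * (C + 1)))"
    using RC by (intro real_exp_bound_lemma) (auto simp: field_simps)
  finally show ?thesis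
    using True RC by (simp add: Phi_eq_1_if_nonpos field_simps)
next
  case False
  define A where "A = C + 1"
  define s where "s = R\<^sup>2 / (3 * C)"
  define x where "x = 1 / (3 * A) - R\<^sup>2 / (9 * A\<^sup>2)"
  have "0 < R" "0 < C" "1 \<le> A"
    using False RC by (auto simp: A_def)
  have avg: "(Phi (R + 1) A + Phi (R - 1) A) / 2 \<le> exp (s + x)"
    unfolding s_def x_def A_def using Phi_avg_le_exp \<open>0 < R\<close> RC by simp
  have Phi_R: "Phi R C = exp s"
    unfolding Phi_def s_def using \<open>0 < R\<close> by simp
  have "exp (s + x) \<le> exp s + 2 / A"
  proof (cases "x \<le> 0")
    case True
    then have "exp (s + x) \<le> exp s"
      by simp
    moreover have "0 \<le> 2 / A"
      using \<open>1 \<le> A\<close> by simp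
    ultimately show ?thesis
      by linarith
  next
    case False
    moreover have "x = (3 * A - R\<^sup>2) / (9 * A\<^sup>2)"
      unfolding x_def using \<open>1 \<le> A\<close> by (simp add: field_simps power2_eq_square)
    ultimately have "0 < (3 * A - R\<^sup>2) / (9 * A\<^sup>2)"
      by simp
    then have "R\<^sup>2 < 3 * A"
      by (simp add: zero_less_divide_iff)
    have "s \<le> 4 / 3"
      using \<open>0 < R\<close> RC \<open>R\<^sup>2 < 3 * A\<close> unfolding s_def A_def by (intro power2_div_le_four_thirds) auto
    moreover have "x \<le> 1 / (3 * A)"
      unfolding x_def by simp
    ultimately show ?thesis
      using \<open>1 \<le> A\<close> by (intro exp_add_le_exp_add_div) auto
  qed
  then show ?thesis
    using avg Phi_R unfolding A_def by linarith
qed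

lemma ln_add_diff_ge:
  fixes a C :: real
  assumes "0 \<le> a" "a \<le> 1" "0 \<le> C"
  shows "a / (C + 1) \<le> 2 * (ln (1 + C + a) - ln (1 + C))"
proof -
  define y where "y = a / (C + 1)"
  have "0 \<le> y" "y \<le> 1"
    using assms by (auto simp: y_def field_simps)
  then have "exp (y / 2) \<le> 1 + y"
    using real_exp_bound_lemma[of "y / 2"] by simp
  then have "y / 2 \<le> ln (1 + y)"
    using \<open>0 \<le> y\<close> by (subst ln_ge_iff) auto
  also have "1 + y = (1 + C + a) / (1 + C)"
    using assms by (simp add: y_def field_simps)
  also have "ln \<dots> = ln (1 + C + a) - ln (1 + C)"
    using assms by (intro ln_divide_pos) auto
  finally have "y \<le> 2 * (ln (1 + C + a) - ln (1 + C))"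
    by simp
  then show ?thesis
    by (simp only: y_def)
qed

(* Interpolate linearly in the direction (sgn r, 1) between r = 0 and r = \<plusminus>1, and apply the
   second-difference bound at the endpoint. *)
lemma Phi_step_le:
  fixes R C r :: real
  assumes RC: "\<bar>R\<bar> \<le> C" and r: "\<bar>r\<bar> \<le> 1"
  shows "Phi (R + r) (C + \<bar>r\<bar>)
    \<le> Phi R C + anh_weight R C * r + 4 * (ln (1 + C + \<bar>r\<bar>) - ln (1 + C))"
proof -
  define a :: real where "a = (if 0 \<le> r then 1 else -1)"
  have "a = 1 \<or> a = -1" and r_eq: "r = a * \<bar>r\<bar>"
    by (auto simp: a_def)
  have interp: "Phi (R + r) (C + \<bar>r\<bar>) \<le> Phi R C + \<bar>r\<bar> * (Phi (R + a) (C + 1) - Phi R C)"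
    using Phi_convex_comb_le[OF _ r RC \<open>a = 1 \<or> a = -1\<close>] r_eq by (simp add: algebra_simps)
  have "Phi (R + a) (C + 1) - Phi R C \<le> a * anh_weight R C + 2 / (C + 1)"
    using Phi_second_difference_le[OF RC] \<open>a = 1 \<or> a = -1\<close>
    unfolding anh_weight_def by (auto simp: field_simps)
  then have "\<bar>r\<bar> * (Phi (R + a) (C + 1) - Phi R C) \<le> \<bar>r\<bar> * (a * anh_weight R C + 2 / (C + 1))"
    by (intro mult_left_mono) auto
  also have "\<dots> = anh_weight R C * (a * \<bar>r\<bar>) + 2 * (\<bar>r\<bar> / (C + 1))"
    by (simp add: algebra_simps)
  finally have "\<bar>r\<bar> * (Phi (R + a) (C + 1) - Phi R C) \<le> anh_weight R C * r + 2 * (\<bar>r\<bar> / (C + 1))"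
    unfolding r_eq[symmetric] .
  moreover have "\<bar>r\<bar> / (C + 1) \<le> 2 * (ln (1 + C + \<bar>r\<bar>) - ln (1 + C))"
    using r RC by (intro ln_add_diff_ge) auto
  ultimately show ?thesis
    using interp by linarith
qed

lemma Phi_sum_le:
  fixes r :: "nat \<Rightarrow> real"
  assumes "\<And>u. s \<le> u \<Longrightarrow> u < t \<Longrightarrow> \<bar>r u\<bar> \<le> 1"
  shows "Phi (\<Sum>u = s..<t. r u) (\<Sum>u = s..<t. \<bar>r u\<bar>)
    \<le> 1 + 4 * ln (1 + (\<Sum>u = s..<t. \<bar>r u\<bar>))
      + (\<Sum>u = s..<t. anh_weight (\<Sum>v = s..<u. r v) (\<Sum>v = s..<u. \<bar>r v\<bar>) * r u)"
  using assms
proof (induction t)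
  case 0
  then show ?case
    by (simp add: Phi_def)
next
  case (Suc t)
  show ?case
  proof (cases "s \<le> t")
    case False
    then show ?thesis
      by (simp add: Phi_def)
  next
    case True
    have "Phi ((\<Sum>u = s..<t. r u) + r t) ((\<Sum>u = s..<t. \<bar>r u\<bar>) + \<bar>r t\<bar>)
      \<le> Phi (\<Sum>u = s..<t. r u) (\<Sum>u = s..<t. \<bar>r u\<bar>)
        + anh_weight (\<Sum>u = s..<t. r u) (\<Sum>u = s..<t. \<bar>r u\<bar>) * r t
        + 4 * (ln (1 + (\<Sum>u = s..<t. \<bar>r u\<bar>) + \<bar>r t\<bar>) - ln (1 + (\<Sum>u = s..<t. \<bar>r u\<bar>)))"
      using Suc.prems True by (intro Phi_step_le sum_abs) auto
    then show ?thesis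
      using Suc True by (simp add: add.assoc)
  qed
qed

lemma le_sqrt_if_Phi_le_exp:
  assumes RC: "\<bar>R\<bar> \<le> C" and "C \<le> L" and Phi: "Phi R C \<le> exp c" and "0 \<le> c"
  shows "R \<le> sqrt (3 * c) * sqrt L"
proof (cases "R \<le> 0")
  case True
  have "0 \<le> L"
    using RC \<open>C \<le> L\<close> abs_ge_zero[of R] by linarith
  then have "0 \<le> sqrt (3 * c) * sqrt L"
    using \<open>0 \<le> c\<close> by simp
  then show ?thesis
    using True by linarith
next
  case False
  then have "0 < C"
    using RC by simp
  then have "R\<^sup>2 / (3 * C) \<le> c"
    using Phi False by (simp add: Phi_def)
  then have "R\<^sup>2 \<le> 3 * c * C"
    using \<open>0 < C\<close> by (simp add: pos_divide_le_eq mult_ac)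
  also have "\<dots> \<le> 3 * c * L"
    using \<open>C \<le> L\<close> \<open>0 \<le> c\<close> by (intro mult_left_mono) auto
  finally have "R\<^sup>2 \<le> 3 * c * L" .
  then show ?thesis
    by (simp add: real_le_rsqrt flip: real_sqrt_mult)
qed

section \<open>Online gradient descent\<close>

lemma convex_on_has_derivative_le:
  fixes f :: "'a::real_inner \<Rightarrow> real"
  assumes S: "convex S" and f: "convex_on S f"
    and deriv: "(f has_derivative (\<lambda>h. d \<bullet> h)) (at v within S)"
    and u: "u \<in> S" and v: "v \<in> S"
  shows "f v - f u \<le> d \<bullet> (v - u)"
proof -
  define p where "p = (\<lambda>l::real. (1 - l) *\<^sub>R v + l *\<^sub>R u)"
  have p_in: "p ` {0..1} \<subseteq> S"
    using S u v by (auto simp: p_def convex_def)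
  have "(p has_derivative (\<lambda>l. l *\<^sub>R (u - v))) (at 0 within {0..1})"
    unfolding p_def by (auto intro!: derivative_eq_intros simp: algebra_simps)
  moreover have "(f has_derivative (\<lambda>h. d \<bullet> h)) (at (p 0) within p ` {0..1})"
    using has_derivative_subset[OF deriv p_in] by (simp add: p_def)
  ultimately have "((\<lambda>l. f (p l)) has_derivative (\<lambda>l. d \<bullet> (l *\<^sub>R (u - v)))) (at 0 within {0..1})"
    by (rule has_derivative_in_compose)
  then have "((\<lambda>l. f (p l)) has_field_derivative (d \<bullet> (u - v))) (at 0 within {0..1})"
    by (simp add: has_field_derivative_def mult_commute_abs)
  then have "((\<lambda>l. (f (p l) - f (p 0)) / (l - 0)) \<longlongrightarrow> d \<bullet> (u - v)) (at 0 within {0..1})"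
    by (simp add: has_field_derivative_iff)
  moreover have "\<forall>\<^sub>F l in at 0 within {0..1}. (f (p l) - f (p 0)) / (l - 0) \<le> f u - f v"
    unfolding eventually_at_filter
  proof (intro always_eventually allI impI)
    fix l :: real
    assume "l \<noteq> 0" "l \<in> {0..1}"
    then have "f (p l) \<le> (1 - l) * f v + l * f u" "0 < l"
      unfolding p_def using convex_onD[OF f, of l v u] u v by auto
    moreover have "p 0 = v"
      by (simp add: p_def)
    ultimately show "(f (p l) - f (p 0)) / (l - 0) \<le> f u - f v"
      by (simp add: pos_divide_le_eq) (simp add: algebra_simps)
  qed
  ultimately have "d \<bullet> (u - v) \<le> f u - f v"
    by (rule tendsto_upperbound) (simp add: at_within_Icc_at_right)
  then show ?thesis
    by (simp add: inner_diff_right)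
qed

lemma inner_le_closest_point_step:
  fixes y u d :: "'a::euclidean_space"
  assumes S: "convex S" "closed S" and "y \<in> S" "u \<in> S" and \<eta>: "0 < \<eta>" and d: "norm d \<le> G"
  shows "d \<bullet> (y - u)
    \<le> ((norm (y - u))\<^sup>2 - (norm (closest_point S (y - \<eta> *\<^sub>R d) - u))\<^sup>2) / (2 * \<eta>) + \<eta> * G\<^sup>2 / 2"
proof -
  have "norm (closest_point S (y - \<eta> *\<^sub>R d) - u) \<le> norm ((y - u) - \<eta> *\<^sub>R d)"
    using closest_point_lipschitz[OF S, of "y - \<eta> *\<^sub>R d" u] closest_point_self[OF \<open>u \<in> S\<close>] \<open>u \<in> S\<close>
    by (auto simp: dist_norm algebra_simps)
  then have "(norm (closest_point S (y - \<eta> *\<^sub>R d) - u))\<^sup>2 \<le> (norm ((y - u) - \<eta> *\<^sub>R d))\<^sup>2"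
    by (intro power_mono) auto
  also have "\<dots> = (norm (y - u))\<^sup>2 - 2 * \<eta> * (d \<bullet> (y - u)) + \<eta>\<^sup>2 * (norm d)\<^sup>2"
    unfolding power2_norm_eq_inner
    by (simp add: inner_diff_left inner_diff_right inner_commute power2_eq_square algebra_simps)
  also have "\<eta>\<^sup>2 * (norm d)\<^sup>2 \<le> \<eta>\<^sup>2 * G\<^sup>2"
    using d by (intro mult_left_mono power_mono) auto
  finally show ?thesis
    using \<eta> by (simp add: field_simps power2_eq_square)
qed

lemma ogd_in: "closed S \<Longrightarrow> x1 \<in> S \<Longrightarrow> ogd S g \<eta> x1 t \<in> S"
  by (cases t) (auto intro: closest_point_in_set)

lemma ogd_linearized_regret_le:
  fixes S :: "'a::euclidean_space set"
  assumes S: "convex S" "closed S" and "x1 \<in> S" "u \<in> S" and \<eta>: "0 < \<eta>" and "1 \<le> s"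
    and grad_bound: "\<And>t. t \<in> {s..<s + n} \<Longrightarrow> norm (g t (ogd S g \<eta> x1 t)) \<le> G"
  shows "(\<Sum>t = s..<s + n. g t (ogd S g \<eta> x1 t) \<bullet> (ogd S g \<eta> x1 t - u))
    \<le> ((norm (ogd S g \<eta> x1 s - u))\<^sup>2 - (norm (ogd S g \<eta> x1 (s + n) - u))\<^sup>2) / (2 * \<eta>)
      + n * \<eta> * G\<^sup>2 / 2"
  using grad_bound
proof (induction n)
  case 0
  then show ?case by simp
next
  case (Suc n)
  let ?x = "ogd S g \<eta> x1"
  have "?x (s + Suc n) = closest_point S (?x (s + n) - \<eta> *\<^sub>R g (s + n) (?x (s + n)))"
    using \<open>1 \<le> s\<close> by simp
  moreover have "g (s + n) (?x (s + n)) \<bullet> (?x (s + n) - u)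
    \<le> ((norm (?x (s + n) - u))\<^sup>2 - (norm (closest_point S (?x (s + n) - \<eta> *\<^sub>R g (s + n) (?x (s + n))) - u))\<^sup>2)
        / (2 * \<eta>) + \<eta> * G\<^sup>2 / 2"
    using Suc.prems by (intro inner_le_closest_point_step[OF S ogd_in[OF S(2) \<open>x1 \<in> S\<close>] \<open>u \<in> S\<close> \<eta>]) auto
  ultimately have "g (s + n) (?x (s + n)) \<bullet> (?x (s + n) - u)
    \<le> ((norm (?x (s + n) - u))\<^sup>2 - (norm (?x (s + Suc n) - u))\<^sup>2) / (2 * \<eta>) + \<eta> * G\<^sup>2 / 2"
    by simp
  moreover have "(\<Sum>t = s..<s + n. g t (?x t) \<bullet> (?x t - u))
    \<le> ((norm (?x s - u))\<^sup>2 - (norm (?x (s + n) - u))\<^sup>2) / (2 * \<eta>) + n * \<eta> * G\<^sup>2 / 2"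
    using Suc by simp
  moreover have "((norm (?x s - u))\<^sup>2 - (norm (?x (s + n) - u))\<^sup>2) / (2 * \<eta>)
      + ((norm (?x (s + n) - u))\<^sup>2 - (norm (?x (s + Suc n) - u))\<^sup>2) / (2 * \<eta>)
    = ((norm (?x s - u))\<^sup>2 - (norm (?x (s + Suc n) - u))\<^sup>2) / (2 * \<eta>)"
    by (simp add: diff_divide_distrib)
  moreover have "real (Suc n) * \<eta> * G\<^sup>2 / 2 = n * \<eta> * G\<^sup>2 / 2 + \<eta> * G\<^sup>2 / 2"
    by (simp add: field_simps)
  moreover have "(\<Sum>t = s..<s + Suc n. g t (?x t) \<bullet> (?x t - u))
    = (\<Sum>t = s..<s + n. g t (?x t) \<bullet> (?x t - u)) + g (s + n) (?x (s + n)) \<bullet> (?x (s + n) - u)"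
    by simp
  ultimately show ?case
    by linarith
qed

lemma ogd_regret_le:
  fixes S :: "'a::euclidean_space set" and f :: "nat \<Rightarrow> 'a \<Rightarrow> real"
  assumes S: "convex S" "closed S" and "x1 \<in> S" "u \<in> S" and "1 \<le> s" and "0 < G"
    and convex_f: "\<And>t. t \<in> {s..<s + n} \<Longrightarrow> convex_on S (f t)"
    and grad: "\<And>t v. t \<in> {s..<s + n} \<Longrightarrow> v \<in> S \<Longrightarrow> (f t has_derivative (\<lambda>h. g t v \<bullet> h)) (at v within S)"
    and grad_bound: "\<And>t v. t \<in> {s..<s + n} \<Longrightarrow> v \<in> S \<Longrightarrow> norm (g t v) \<le> G"
    and diam: "\<And>v v'. v \<in> S \<Longrightarrow> v' \<in> S \<Longrightarrow> norm (v - v') \<le> D"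
  shows "(\<Sum>t = s..<s + n. f t (ogd S g (D / (G * sqrt n)) x1 t) - f t u) \<le> D * G * sqrt n"
proof -
  define \<eta> where "\<eta> = D / (G * sqrt n)"
  let ?x = "ogd S g \<eta> x1"
  have x_in: "?x t \<in> S" for t
    using ogd_in[OF S(2) \<open>x1 \<in> S\<close>] .
  have "0 \<le> D"
    using diam[OF \<open>u \<in> S\<close> \<open>u \<in> S\<close>] by simp
  show ?thesis
  proof (cases "D = 0 \<or> n = 0")
    case True
    then have "?x t = u" if "D = 0" for t
      using diam[OF x_in \<open>u \<in> S\<close>] that by simp
    with True show ?thesis
      unfolding \<eta>_def[symmetric] by auto
  next
    case False
    then have "0 < \<eta>"
      using \<open>0 \<le> D\<close> \<open>0 < G\<close> by (simp add: \<eta>_def)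
    have "(\<Sum>t = s..<s + n. f t (?x t) - f t u) \<le> (\<Sum>t = s..<s + n. g t (?x t) \<bullet> (?x t - u))"
      using convex_on_has_derivative_le[OF S(1) convex_f grad] x_in \<open>u \<in> S\<close>
      by (intro sum_mono) auto
    also have "\<dots> \<le> ((norm (?x s - u))\<^sup>2 - (norm (?x (s + n) - u))\<^sup>2) / (2 * \<eta>) + n * \<eta> * G\<^sup>2 / 2"
      using grad_bound x_in by (intro ogd_linearized_regret_le[OF S \<open>x1 \<in> S\<close> \<open>u \<in> S\<close> \<open>0 < \<eta>\<close> \<open>1 \<le> s\<close>]) auto
    also have "\<dots> \<le> D\<^sup>2 / (2 * \<eta>) + n * \<eta> * G\<^sup>2 / 2"
    proof -
      have "(norm (?x s - u))\<^sup>2 \<le> D\<^sup>2"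
        using diam[OF x_in \<open>u \<in> S\<close>] by (intro power_mono) auto
      then have "(norm (?x s - u))\<^sup>2 - (norm (?x (s + n) - u))\<^sup>2 \<le> D\<^sup>2"
        using zero_le_power2[of "norm (?x (s + n) - u)"] by linarith
      then show ?thesis
        using \<open>0 < \<eta>\<close> by (intro add_right_mono divide_right_mono) auto
    qed
    also have "\<dots> = D * G * sqrt n"
      using False \<open>0 < G\<close> by (simp add: \<eta>_def field_simps power2_eq_square)
    finally show ?thesis
      unfolding \<eta>_def .
  qed
qed

section \<open>The dense geometric covering\<close>

lemma finite_levels: "finite (levels T)"
proof (rule finite_subset)
  show "levels T \<subseteq> {..T}"
  proof
    fix k
    assume "k \<in> levels T"
    then have "k < 2 ^ k" "2 ^ k \<le> T"
      by (simp_all add: levels_def less_exp)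
    then show "k \<in> {..T}"
      by (simp only: atMost_iff)
  qed
qed simp

lemma card_levels_le:
  assumes "1 \<le> T"
  shows "real (card (levels T)) \<le> 1 + log 2 T"
proof -
  define n where "n = nat \<lfloor>log 2 T\<rfloor>"
  have "levels T \<subseteq> {..n}"
  proof
    fix k
    assume "k \<in> levels T"
    then have "log 2 (2 ^ k) \<le> log 2 T"
      using assms by (simp add: levels_def del: log_pow_cancel flip: of_nat_le_iff)
    then show "k \<in> {..n}"
      by (simp add: n_def le_nat_floor)
  qed
  then have "card (levels T) \<le> n + 1"
    using card_mono[of "{..n}"] by fastforce
  moreover have "real n \<le> log 2 T"
    using assms by (simp add: n_def)
  ultimately show ?thesis
    by linarith
qed

(* {block_start k i..<block_end k j i} is the i-th level-k interval of the covering (counting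
   from 0), cut off after round j. *)
definition block_start :: "nat \<Rightarrow> nat \<Rightarrow> nat" where
  "block_start k i = 2 ^ k * i + 1"

definition block_end :: "nat \<Rightarrow> nat \<Rightarrow> nat \<Rightarrow> nat" where
  "block_end k j i = min (2 ^ k * Suc i) j + 1"

lemma div_eq_iff_nat: "0 < b \<Longrightarrow> a div b = i \<longleftrightarrow> b * i \<le> a \<and> a < b * Suc i" for a b i :: nat
proof
  assume "0 < b" "a div b = i"
  then show "b * i \<le> a \<and> a < b * Suc i"
    using times_div_less_eq_dividend[of b a] dividend_less_times_div[of b a] by auto
qed (auto intro: div_nat_eqI)

lemma block_eq: "{block_start k i..<block_end k j i} = {v \<in> {1..j}. (v - 1) div 2 ^ k = i}"
proof (intro set_eqI)
  fix v
  have "v \<in> {block_start k i..<block_end k j i} \<longleftrightarrow> 1 \<le> v \<and> v \<le> j \<and> 2 ^ k * i \<le> v - 1 \<and> v - 1 < 2 ^ k * Suc i"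
    unfolding block_start_def block_end_def by auto
  also have "\<dots> \<longleftrightarrow> v \<in> {v \<in> {1..j}. (v - 1) div 2 ^ k = i}"
    using div_eq_iff_nat[of "2 ^ k" "v - 1" i] by simp
  finally show "v \<in> {block_start k i..<block_end k j i} \<longleftrightarrow> v \<in> {v \<in> {1..j}. (v - 1) div 2 ^ k = i}" .
qed

lemma ivl_start_eq_block_start:
  assumes "v \<in> {block_start k i..<block_end k j i}"
  shows "ivl_start k v = block_start k i"
proof -
  have "(v - 1) div 2 ^ k = i"
    using assms unfolding block_eq by simp
  then show ?thesis
    by (simp add: ivl_start_def block_start_def mult.commute)
qed

lemma sum_blocks: "(\<Sum>i<j. \<Sum>v = block_start k i..<block_end k j i. h v) = (\<Sum>v = 1..j. h v)"
proof -
  have "(v - 1) div 2 ^ k < j" if "1 \<le> v" "v \<le> j" for v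
    using div_le_dividend[of "v - 1" "2 ^ k"] that by linarith
  then have "(\<lambda>v. (v - 1) div 2 ^ k) ` {1..j} \<subseteq> {..<j}"
    by auto
  then show ?thesis
    unfolding block_eq using sum.group[of "{1..j}" "{..<j}" "\<lambda>v. (v - 1) div 2 ^ k" h] by simp
qed

section \<open>Analysis of AOD\<close>

(* If all weights vanish, division by zero makes the weighted mean 0; hence the hypothesis 0 \<in> S. *)
lemma weighted_mean_convex_on_le:
  fixes y :: "'b \<Rightarrow> 'a::real_vector"
  assumes K: "finite K" and S: "convex S" "0 \<in> S" and \<phi>: "convex_on S \<phi>"
    and a: "\<And>k. k \<in> K \<Longrightarrow> 0 \<le> a k" and y: "\<And>k. k \<in> K \<Longrightarrow> y k \<in> S"
    and z: "z = (\<Sum>k\<in>K. (a k / (\<Sum>k'\<in>K. a k')) *\<^sub>R y k)"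
  shows "z \<in> S" and "(\<Sum>k\<in>K. a k * (\<phi> z - \<phi> (y k))) \<le> 0"
proof -
  define W where "W = (\<Sum>k\<in>K. a k)"
  have "z \<in> S \<and> (\<Sum>k\<in>K. a k * (\<phi> z - \<phi> (y k))) \<le> 0"
  proof (cases "W = 0")
    case True
    then have "\<forall>k\<in>K. a k = 0"
      using sum_nonneg_eq_0_iff[OF K] a unfolding W_def by blast
    then show ?thesis
      using z S by simp
  next
    case False
    then have "0 < W" "K \<noteq> {}"
      using a sum_nonneg[of K a] unfolding W_def by fastforce+
    have weights: "(\<Sum>k\<in>K. a k / W) = 1" "\<And>k. k \<in> K \<Longrightarrow> 0 \<le> a k / W"
      using \<open>0 < W\<close> a by (simp_all add: W_def flip: sum_divide_distrib)
    have "z \<in> S"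
      unfolding z W_def[symmetric] using convex_sum[OF K S(1) weights] y by auto
    have "\<phi> z \<le> (\<Sum>k\<in>K. (a k / W) * \<phi> (y k))"
      unfolding z W_def[symmetric] using convex_on_sum[OF K \<open>K \<noteq> {}\<close> \<phi> weights] y by auto
    also have "(\<Sum>k\<in>K. (a k / W) * \<phi> (y k)) = (\<Sum>k\<in>K. a k * \<phi> (y k)) / W"
      by (simp add: sum_divide_distrib)
    finally have "W * \<phi> z \<le> (\<Sum>k\<in>K. a k * \<phi> (y k))"
      using \<open>0 < W\<close> by (simp add: pos_le_divide_eq mult.commute)
    then show ?thesis
      using \<open>z \<in> S\<close> by (simp add: W_def algebra_simps sum_subtractf sum_distrib_left)
  qed
  then show "z \<in> S" and "(\<Sum>k\<in>K. a k * (\<phi> z - \<phi> (y k))) \<le> 0"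
    by auto
qed

lemma exp_one_ge: "8 / 3 \<le> exp (1 :: real)"
proof -
  have "25 / 18 \<le> exp (1 / 3 :: real)"
    using exp_lower_Taylor_quadratic[of "1 / 3 :: real"] by (simp add: power2_eq_square)
  then have "(25 / 18) ^ 3 \<le> exp (1 / 3 :: real) ^ 3"
    by (intro power_mono) auto
  also have "exp (1 / 3 :: real) ^ 3 = exp 1"
    by (simp flip: exp_of_nat_mult)
  finally show ?thesis
    by (simp add: eval_nat_numeral)
qed

lemma le_exp_c_fun:
  assumes N: "1 \<le> N" "N \<le> 1 + log 2 T" and j: "1 \<le> j"
  shows "N * j * (1 + 4 * ln (1 + j)) \<le> exp (c_fun T j)"
proof -
  define L where "L = ln (1 + real j)"
  have "0 \<le> L"
    by (simp add: L_def)
  have "1 + 4 * L \<le> exp 1 * ((5 + 3 * L) / 2)"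
    using mult_right_mono[OF exp_one_ge, of "(5 + 3 * L) / 2"] \<open>0 \<le> L\<close> by simp
  then have "N * j * (1 + 4 * L) \<le> (1 + log 2 T) * j * (exp 1 * ((5 + 3 * L) / 2))"
    using N \<open>0 \<le> L\<close> by (intro mult_mono) auto
  also have "\<dots> = exp (c_fun T j)"
    unfolding c_fun_def L_def[symmetric] using N j \<open>0 \<le> L\<close>
    by (simp add: exp_add del: exp_ln_iff)
  finally show ?thesis
    by (simp only: L_def)
qed

lemma c_fun_nonneg: "1 \<le> j \<Longrightarrow> 1 \<le> T \<Longrightarrow> 0 \<le> c_fun T j"
  unfolding c_fun_def by (intro add_nonneg_nonneg) auto

locale aod =
  fixes \<Omega> :: "'a::euclidean_space set"
    and f :: "nat \<Rightarrow> 'a \<Rightarrow> real" and g :: "nat \<Rightarrow> 'a \<Rightarrow> 'a"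
    and D G :: real and T :: nat
    and x1 :: "nat \<Rightarrow> 'a" and w :: "nat \<Rightarrow> 'a"
  assumes convex_dom: "convex \<Omega>" and closed_dom: "closed \<Omega>" and zero_in_dom: "0 \<in> \<Omega>"
    and convex_loss: "\<And>t. t \<in> {1..T} \<Longrightarrow> convex_on \<Omega> (f t)"
    and grad: "\<And>t v. t \<in> {1..T} \<Longrightarrow> v \<in> \<Omega> \<Longrightarrow> (f t has_derivative (\<lambda>h. g t v \<bullet> h)) (at v within \<Omega>)"
    and grad_bound: "\<And>t v. t \<in> {1..T} \<Longrightarrow> v \<in> \<Omega> \<Longrightarrow> norm (g t v) \<le> G"
    and G_pos: "0 < G"
    and diam: "\<And>v v'. v \<in> \<Omega> \<Longrightarrow> v' \<in> \<Omega> \<Longrightarrow> norm (v - v') \<le> D"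
    and loss_range: "\<And>t v. t \<in> {1..T} \<Longrightarrow> v \<in> \<Omega> \<Longrightarrow> 0 \<le> f t v \<and> f t v \<le> 1"
    and init_in_dom: "\<And>k. x1 k \<in> \<Omega>"
    and play: "is_aod_play \<Omega> f g D G T x1 w"
begin

abbreviation expert :: "nat \<Rightarrow> nat \<Rightarrow> 'a" where
  "expert \<equiv> expert_pt \<Omega> g D G x1"

abbreviation weight :: "nat \<Rightarrow> nat \<Rightarrow> real" where
  "weight \<equiv> aod_w \<Omega> f g D G x1 w"

abbreviation inst_regret :: "nat \<Rightarrow> nat \<Rightarrow> real" where
  "inst_regret k t \<equiv> f t (w t) - f t (expert k t)"

lemma expert_in_dom: "expert k t \<in> \<Omega>"
  unfolding expert_pt_def using ogd_in[OF closed_dom init_in_dom] .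

lemma weight_eq:
  "weight k t = anh_weight (\<Sum>v = ivl_start k t..<t. inst_regret k v)
                           (\<Sum>v = ivl_start k t..<t. \<bar>inst_regret k v\<bar>)"
  unfolding aod_w_def R_stat_def C_stat_def ..

lemma weight_nonneg: "0 \<le> weight k t"
  unfolding weight_eq by (intro anh_weight_nonneg sum_nonneg) auto

lemma play_in_dom_and_weighted_regret_nonpos:
  assumes "t \<in> {1..T}"
  shows "w t \<in> \<Omega>" and "(\<Sum>k\<in>levels T. weight k t * inst_regret k t) \<le> 0"
proof -
  have "w t = (\<Sum>k\<in>levels T. (weight k t / (\<Sum>k'\<in>levels T. weight k' t)) *\<^sub>R expert k t)"
    using play assms unfolding is_aod_play_def aod_p_def by auto
  note mean = weighted_mean_convex_on_le[OF finite_levels convex_dom zero_in_dom convex_loss[OF assms]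
      weight_nonneg expert_in_dom this]
  from mean(1) show "w t \<in> \<Omega>" .
  from mean(2) show "(\<Sum>k\<in>levels T. weight k t * inst_regret k t) \<le> 0" .
qed

lemma abs_inst_regret_le_1:
  assumes "t \<in> {1..T}"
  shows "\<bar>inst_regret k t\<bar> \<le> 1"
proof -
  have "0 \<le> f t (w t) \<and> f t (w t) \<le> 1" "0 \<le> f t (expert k t) \<and> f t (expert k t) \<le> 1"
    using assms loss_range play_in_dom_and_weighted_regret_nonpos(1) expert_in_dom by blast+
  then show ?thesis
    by (simp add: abs_le_iff)
qed

lemma Phi_block_le:
  assumes "j \<le> T"
  shows "Phi (R_stat f w (expert k) (block_start k i) (block_end k j i))
             (C_stat f w (expert k) (block_start k i) (block_end k j i))
    \<le> 1 + 4 * ln (1 + real j) + (\<Sum>v = block_start k i..<block_end k j i. weight k v * inst_regret k v)"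
proof -
  let ?s = "block_start k i" and ?e = "block_end k j i"
  have bound: "\<bar>inst_regret k v\<bar> \<le> 1" if "?s \<le> v" "v < ?e" for v
    using that assms by (intro abs_inst_regret_le_1) (auto simp: block_start_def block_end_def)
  have "(\<Sum>v = ?s..<?e. \<bar>inst_regret k v\<bar>) \<le> card {?s..<?e}"
    using sum_bounded_above[of "{?s..<?e}" "\<lambda>v. \<bar>inst_regret k v\<bar>" 1] bound by simp
  also have "card {?s..<?e} \<le> j"
    by (simp add: block_start_def block_end_def)
  finally have "ln (1 + (\<Sum>v = ?s..<?e. \<bar>inst_regret k v\<bar>)) \<le> ln (1 + real j)"
    by (simp add: sum_nonneg add_pos_nonneg)
  moreover have "Phi (\<Sum>v = ?s..<?e. inst_regret k v) (\<Sum>v = ?s..<?e. \<bar>inst_regret k v\<bar>)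
    \<le> 1 + 4 * ln (1 + (\<Sum>v = ?s..<?e. \<bar>inst_regret k v\<bar>))
      + (\<Sum>v = ?s..<?e. anh_weight (\<Sum>u = ?s..<v. inst_regret k u) (\<Sum>u = ?s..<v. \<bar>inst_regret k u\<bar>)
        * inst_regret k v)"
    using bound by (rule Phi_sum_le)
  moreover have "(\<Sum>v = ?s..<?e. anh_weight (\<Sum>u = ?s..<v. inst_regret k u) (\<Sum>u = ?s..<v. \<bar>inst_regret k u\<bar>)
      * inst_regret k v) = (\<Sum>v = ?s..<?e. weight k v * inst_regret k v)"
    by (intro sum.cong) (simp_all add: weight_eq ivl_start_eq_block_start)
  ultimately show ?thesis
    unfolding R_stat_def C_stat_def by linarith
qed

lemma sum_Phi_blocks_le:
  assumes "j \<le> T"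
  shows "(\<Sum>k\<in>levels T. \<Sum>i<j. Phi (R_stat f w (expert k) (block_start k i) (block_end k j i))
                                     (C_stat f w (expert k) (block_start k i) (block_end k j i)))
    \<le> real (card (levels T)) * real j * (1 + 4 * ln (1 + real j))"
proof -
  have "(\<Sum>k\<in>levels T. \<Sum>i<j. Phi (R_stat f w (expert k) (block_start k i) (block_end k j i))
                                 (C_stat f w (expert k) (block_start k i) (block_end k j i)))
    \<le> (\<Sum>k\<in>levels T. \<Sum>i<j. 1 + 4 * ln (1 + real j)
        + (\<Sum>v = block_start k i..<block_end k j i. weight k v * inst_regret k v))"
    using assms by (intro sum_mono Phi_block_le)
  also have "\<dots> = real (card (levels T)) * real j * (1 + 4 * ln (1 + real j))
      + (\<Sum>v = 1..j. \<Sum>k\<in>levels T. weight k v * inst_regret k v)"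
    by (simp add: sum.distrib sum_blocks sum.swap[of _ "levels T"])
  also have "(\<Sum>v = 1..j. \<Sum>k\<in>levels T. weight k v * inst_regret k v) \<le> 0"
    using assms by (intro sum_nonpos play_in_dom_and_weighted_regret_nonpos(2)) auto
  finally show ?thesis
    by simp
qed

lemma Phi_interval_le:
  assumes "1 \<le> m" "m * 2 ^ k \<le> T"
  shows "Phi (R_stat f w (expert k) ((m - 1) * 2 ^ k + 1) (m * 2 ^ k + 1))
             (C_stat f w (expert k) ((m - 1) * 2 ^ k + 1) (m * 2 ^ k + 1))
    \<le> exp (c_fun T (m * 2 ^ k))"
proof -
  define j where "j = m * 2 ^ k"
  define P where "P k' i = Phi (R_stat f w (expert k') (block_start k' i) (block_end k' j i))
                               (C_stat f w (expert k') (block_start k' i) (block_end k' j i))" for k' i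
  have P_nonneg: "0 \<le> P k' i" for k' i
    unfolding P_def using Phi_pos less_imp_le by blast
  have "1 \<le> j" "j \<le> T" "k \<in> levels T"
    using assms order_trans[of "2 ^ k" j T] by (auto simp: j_def levels_def)
  have "block_start k (m - 1) = (m - 1) * 2 ^ k + 1" "block_end k j (m - 1) = m * 2 ^ k + 1"
    using \<open>1 \<le> m\<close> by (auto simp: block_start_def block_end_def j_def mult.commute)
  then have "Phi (R_stat f w (expert k) ((m - 1) * 2 ^ k + 1) (m * 2 ^ k + 1))
                 (C_stat f w (expert k) ((m - 1) * 2 ^ k + 1) (m * 2 ^ k + 1)) = P k (m - 1)"
    by (simp add: P_def)
  also have "\<dots> \<le> (\<Sum>i<j. P k i)"
  proof (intro member_le_sum P_nonneg)
    have "m \<le> j"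
      by (simp add: j_def)
    then show "m - 1 \<in> {..<j}"
      using \<open>1 \<le> m\<close> by simp
  qed simp
  also have "\<dots> \<le> (\<Sum>k'\<in>levels T. \<Sum>i<j. P k' i)"
    using \<open>k \<in> levels T\<close> by (intro member_le_sum sum_nonneg P_nonneg finite_levels)
  also have "\<dots> \<le> real (card (levels T)) * real j * (1 + 4 * ln (1 + real j))"
    unfolding P_def using \<open>j \<le> T\<close> by (rule sum_Phi_blocks_le)
  also have "\<dots> \<le> exp (c_fun T j)"
  proof (rule le_exp_c_fun)
    have "0 < card (levels T)"
      using \<open>k \<in> levels T\<close> finite_levels by (auto simp: card_gt_0_iff)
    then show "1 \<le> real (card (levels T))"
      by simp
    show "real (card (levels T)) \<le> 1 + log 2 T"
      using \<open>1 \<le> j\<close> \<open>j \<le> T\<close> by (intro card_levels_le) simp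
  qed fact
  finally show ?thesis
    by (simp add: j_def)
qed

lemma meta_regret_interval_le:
  assumes "1 \<le> m" "m * 2 ^ k \<le> T"
  shows "R_stat f w (expert k) ((m - 1) * 2 ^ k + 1) (m * 2 ^ k + 1)
    \<le> sqrt (3 * c_fun T (m * 2 ^ k)) * sqrt (2 ^ k)"
proof -
  let ?s = "(m - 1) * 2 ^ k + 1" and ?e = "m * 2 ^ k + 1"
  have R_le_C: "\<bar>R_stat f w (expert k) ?s ?e\<bar> \<le> C_stat f w (expert k) ?s ?e"
    unfolding R_stat_def C_stat_def by (rule sum_abs)
  have "C_stat f w (expert k) ?s ?e \<le> real (card {?s..<?e})"
    unfolding C_stat_def using assms abs_inst_regret_le_1
    by (intro sum_bounded_above[where K = 1, simplified]) auto
  also have "real (card {?s..<?e}) = 2 ^ k"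
    using \<open>1 \<le> m\<close> by (cases m) auto
  finally have C_le: "C_stat f w (expert k) ?s ?e \<le> 2 ^ k" .
  have "0 \<le> c_fun T (m * 2 ^ k)"
  proof (rule c_fun_nonneg)
    show "1 \<le> m * 2 ^ k"
      using \<open>1 \<le> m\<close> by simp
    then show "1 \<le> T"
      using \<open>m * 2 ^ k \<le> T\<close> by linarith
  qed
  then show ?thesis
    by (rule le_sqrt_if_Phi_le_exp[OF R_le_C C_le Phi_interval_le[OF assms]])
qed

lemma expert_regret_interval_le:
  assumes "1 \<le> m" "m * 2 ^ k \<le> T" and "u \<in> \<Omega>"
  shows "(\<Sum>t = (m - 1) * 2 ^ k + 1..<m * 2 ^ k + 1. f t (expert k t) - f t u) \<le> D * G * sqrt (2 ^ k)"
proof -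
  let ?s = "(m - 1) * 2 ^ k + 1"
  have "?s + 2 ^ k = m * 2 ^ k + 1"
    using \<open>1 \<le> m\<close> by (cases m) auto
  moreover have "t \<in> {1..T}" if "t \<in> {?s..<?s + 2 ^ k}" for t
    using that calculation assms by auto
  ultimately have "(\<Sum>t = ?s..<?s + 2 ^ k. f t (ogd \<Omega> g (D / (G * sqrt (2 ^ k))) (x1 k) t) - f t u)
      \<le> D * G * sqrt (2 ^ k)"
    using ogd_regret_le[OF convex_dom closed_dom init_in_dom \<open>u \<in> \<Omega>\<close> _ G_pos, of ?s "2 ^ k" f g D]
      convex_loss grad grad_bound diam
    by simp
  with \<open>?s + 2 ^ k = m * 2 ^ k + 1\<close> show ?thesis
    unfolding expert_pt_def eta_def by simp
qed

end

theorem lemma2: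
  fixes \<Omega> :: "'a::euclidean_space set"
    and f :: "nat \<Rightarrow> 'a \<Rightarrow> real" and g :: "nat \<Rightarrow> 'a \<Rightarrow> 'a"
    and D G :: real and T :: nat
    and x1 :: "nat \<Rightarrow> 'a" and w :: "nat \<Rightarrow> 'a"
    and k m :: nat
  assumes conv_dom: "convex \<Omega>" and closed_dom: "closed \<Omega>"
    and conv_f: "\<forall>t\<in>{1..T}. convex_on \<Omega> (f t)"
    and grad: "\<forall>t\<in>{1..T}. \<forall>v\<in>\<Omega>. (f t has_derivative (\<lambda>h. g t v \<bullet> h)) (at v within \<Omega>)"
    and A1: "\<forall>t\<in>{1..T}. \<forall>v\<in>\<Omega>. norm (g t v) \<le> G"
    and Gpos: "G > 0"
    and A2_zero: "0 \<in> \<Omega>"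
    and A2_diam: "\<forall>v\<in>\<Omega>. \<forall>v'\<in>\<Omega>. norm (v - v') \<le> D"
    and A3: "\<forall>t\<in>{1..T}. \<forall>v\<in>\<Omega>. 0 \<le> f t v \<and> f t v \<le> 1"
    and init: "\<forall>k. x1 k \<in> \<Omega>"
    and play: "is_aod_play \<Omega> f g D G T x1 w"
    and J_level: "2 ^ k \<le> T" and J_idx: "m \<ge> 1" and J_end: "m * 2 ^ k \<le> T"
  shows "\<forall>u\<in>\<Omega>.
           (\<Sum>t = (m - 1) * 2 ^ k + 1 .. m * 2 ^ k. f t (w t))
         - (\<Sum>t = (m - 1) * 2 ^ k + 1 .. m * 2 ^ k. f t u)
         \<le> (sqrt (3 * c_fun T (m * 2 ^ k)) + D * G) * sqrt (real (2 ^ k))"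
proof
  fix u
  assume "u \<in> \<Omega>"
  interpret aod \<Omega> f g D G T x1 w
    using assms by unfold_locales auto
  let ?s = "(m - 1) * 2 ^ k + 1" and ?e = "m * 2 ^ k + 1"
  have "(\<Sum>t = ?s..m * 2 ^ k. f t (w t)) - (\<Sum>t = ?s..m * 2 ^ k. f t u)
      = R_stat f w (expert k) ?s ?e + (\<Sum>t = ?s..<?e. f t (expert k t) - f t u)"
    unfolding R_stat_def
    by (simp add: atLeastLessThanSuc_atLeastAtMost flip: sum_subtractf sum.distrib)
  also have "\<dots> \<le> sqrt (3 * c_fun T (m * 2 ^ k)) * sqrt (2 ^ k) + D * G * sqrt (2 ^ k)"
    using meta_regret_interval_le[OF J_idx J_end]
      expert_regret_interval_le[OF J_idx J_end \<open>u \<in> \<Omega>\<close>]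
    by (rule add_mono)
  finally show "(\<Sum>t = ?s..m * 2 ^ k. f t (w t)) - (\<Sum>t = ?s..m * 2 ^ k. f t u)
      \<le> (sqrt (3 * c_fun T (m * 2 ^ k)) + D * G) * sqrt (real (2 ^ k))"
    by (simp add: algebra_simps)
qed

end
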